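(* Let $\mathcal{D}=(\mathcal{P},\mathcal{B},\mathcal{I})$ be a $(v,b,r,k,\lambda_1,0)$ SPBIBD of type $(k-1,t)$ with $0<t<k$, and let $\Gamma$ be its incidence graph. Then every vertex $p\in\mathcal{P}$ is distance-regularized. Moreover, $\Gamma$ is distance-semiregular with respect to $\mathcal{P}$ with intersection numbers $c_0=0,\ c_1=1,\ c_2=\lambda_1,\ c_3=t,\ c_4=r$; $b_0=r,\ b_1=k-1,\ b_2=r-\lambda_1,\ b_3=k-t,\ b_4=0$.
   Context: A design $\mathcal{D}=(\mathcal{P},\mathcal{B},\mathcal{I})$ is an incidence structure with $|\mathcal{P}|=v$, $|\mathcal{B}|=b$, every block incident with exactly $k$ points and every point with exactly $r$ blocks; standing assumptions: $v>k$ and $r<b$. $(p,B)$ is a flag if $p\in B$, a non-flag otherwise. $\mathcal{D}$ is a $(v,b,r,k,\lambda_1,\lambda_2)$ SPBIBD of type $(s,t)$ if (i) any two distinct points are together in exactly $\lambda_1$ or exactly $\lambda_2$ blocks; (ii) for every flag $(p,B)$, the number of points of $B$ other than $p$ lying with $p$ in exactly $\lambda_1$ blocks is $s$; (iii) for every non-flag $(p,B)$, the number of points of $B$ lying with $p$ in exactly $\lambda_1$ blocks is $t$. The incidence graph is the bipartite graph on $\mathcal{P}\cup\mathcal{B}$ with $p\sim B$ iff $p\in B$. For a connected graph, $\Gamma_i(u)$ is the set of vertices at distance $i$ from $u$, $\Gamma(u)=\Gamma_1(u)$, $\varepsilon(u)$ the eccentricity. For $w\in\Gamma_i(u)$, $b_i(u,w)=|\Gamma_{i+1}(u)\cap\Gamma(w)|$,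 $c_i(u,w)=|\Gamma_{i-1}(u)\cap\Gamma(w)|$, $a_i(u,w)=|\Gamma_i(u)\cap\Gamma(w)|$. $u$ is distance-regularized if for each $0\le i\le\varepsilon(u)$ these do not depend on $w\in\Gamma_i(u)$. A connected $(Y,Y')$-bipartite graph is distance-semiregular with respect to $Y$ if every vertex of $Y$ is distance-regularized with the same numbers $b_i, c_i$ (i.e. $b_i(x,w)=b_i$, $c_i(x,w)=c_i$ for all $x\in Y$, $w\in\Gamma_i(x)$). *)

theory Defs
  imports Main
begin

text \<open>A design with point set P, block set Bs and incidence relation I
(only its restriction to P x Bs matters).\<close>

definition design ::
  "'p set \<Rightarrow> 'b set \<Rightarrow> ('p \<Rightarrow> 'b \<Rightarrow> bool) \<Rightarrow> nat \<Rightarrow> nat \<Rightarrow> nat \<Rightarrow> nat \<Rightarrow> bool" where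
  "design P Bs I v b r k \<longleftrightarrow>
     finite P \<and> finite Bs \<and> card P = v \<and> card Bs = b \<and>
     (\<forall>B\<in>Bs. card {p\<in>P. I p B} = k) \<and>
     (\<forall>p\<in>P. card {B\<in>Bs. I p B} = r) \<and>
     v > k \<and> r < b"

definition conc :: "'p set \<Rightarrow> 'b set \<Rightarrow> ('p \<Rightarrow> 'b \<Rightarrow> bool) \<Rightarrow> 'p \<Rightarrow> 'p \<Rightarrow> nat" where
  "conc P Bs I p q = card {B\<in>Bs. I p B \<and> I q B}"

definition spbibd ::
  "'p set \<Rightarrow> 'b set \<Rightarrow> ('p \<Rightarrow> 'b \<Rightarrow> bool) \<Rightarrow> nat \<Rightarrow> nat \<Rightarrow> nat \<Rightarrow> nat \<Rightarrow> nat \<Rightarrow> nat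
     \<Rightarrow> nat \<Rightarrow> nat \<Rightarrow> bool" where
  "spbibd P Bs I v b r k l1 l2 s t \<longleftrightarrow>
     design P Bs I v b r k \<and>
     (\<forall>p\<in>P. \<forall>q\<in>P. p \<noteq> q \<longrightarrow> conc P Bs I p q = l1 \<or> conc P Bs I p q = l2) \<and>
     (\<forall>p\<in>P. \<forall>B\<in>Bs. I p B \<longrightarrow>
        card {q\<in>P. q \<noteq> p \<and> I q B \<and> conc P Bs I p q = l1} = s) \<and>
     (\<forall>p\<in>P. \<forall>B\<in>Bs. \<not> I p B \<longrightarrow>
        card {q\<in>P. I q B \<and> conc P Bs I p q = l1} = t)"

definition inc_vertices :: "'p set \<Rightarrow> 'b set \<Rightarrow> ('p + 'b) set" where
  "inc_vertices P Bs = Inl ` P \<union> Inr ` Bs"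

fun inc_adj :: "'p set \<Rightarrow> 'b set \<Rightarrow> ('p \<Rightarrow> 'b \<Rightarrow> bool) \<Rightarrow> 'p + 'b \<Rightarrow> 'p + 'b \<Rightarrow> bool" where
  "inc_adj P Bs I (Inl p) (Inr B) = (p \<in> P \<and> B \<in> Bs \<and> I p B)"
| "inc_adj P Bs I (Inr B) (Inl p) = (p \<in> P \<and> B \<in> Bs \<and> I p B)"
| "inc_adj P Bs I _ _ = False"

inductive walk :: "('v \<Rightarrow> 'v \<Rightarrow> bool) \<Rightarrow> nat \<Rightarrow> 'v \<Rightarrow> 'v \<Rightarrow> bool" for adj where
  walk0: "walk adj 0 u u"
| walkS: "adj u x \<Longrightarrow> walk adj n x w \<Longrightarrow> walk adj (Suc n) u w"

definition gconnected :: "'v set \<Rightarrow> ('v \<Rightarrow> 'v \<Rightarrow> bool) \<Rightarrow> bool" where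
  "gconnected V adj \<longleftrightarrow> (\<forall>u\<in>V. \<forall>w\<in>V. \<exists>n. walk adj n u w)"

definition gdist :: "('v \<Rightarrow> 'v \<Rightarrow> bool) \<Rightarrow> 'v \<Rightarrow> 'v \<Rightarrow> nat" where
  "gdist adj u w = (LEAST n. walk adj n u w)"

definition sphere :: "'v set \<Rightarrow> ('v \<Rightarrow> 'v \<Rightarrow> bool) \<Rightarrow> 'v \<Rightarrow> nat \<Rightarrow> 'v set" where
  "sphere V adj u i = {w\<in>V. (\<exists>n. walk adj n u w) \<and> gdist adj u w = i}"

definition nbhd :: "'v set \<Rightarrow> ('v \<Rightarrow> 'v \<Rightarrow> bool) \<Rightarrow> 'v \<Rightarrow> 'v set" where
  "nbhd V adj w = {x\<in>V. adj w x}"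

definition ecc :: "'v set \<Rightarrow> ('v \<Rightarrow> 'v \<Rightarrow> bool) \<Rightarrow> 'v \<Rightarrow> nat" where
  "ecc V adj u = Max (gdist adj u ` V)"

definition bnum :: "'v set \<Rightarrow> ('v \<Rightarrow> 'v \<Rightarrow> bool) \<Rightarrow> 'v \<Rightarrow> 'v \<Rightarrow> nat" where
  "bnum V adj u w = card (sphere V adj u (Suc (gdist adj u w)) \<inter> nbhd V adj w)"

definition cnum :: "'v set \<Rightarrow> ('v \<Rightarrow> 'v \<Rightarrow> bool) \<Rightarrow> 'v \<Rightarrow> 'v \<Rightarrow> nat" where
  "cnum V adj u w =
     (if gdist adj u w = 0 then 0
      else card (sphere V adj u (gdist adj u w - 1) \<inter> nbhd V adj w))"

definition anum :: "'v set \<Rightarrow> ('v \<Rightarrow> 'v \<Rightarrow> bool) \<Rightarrow> 'v \<Rightarrow> 'v \<Rightarrow> nat" where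
  "anum V adj u w = card (sphere V adj u (gdist adj u w) \<inter> nbhd V adj w)"

definition distance_regularized :: "'v set \<Rightarrow> ('v \<Rightarrow> 'v \<Rightarrow> bool) \<Rightarrow> 'v \<Rightarrow> bool" where
  "distance_regularized V adj u \<longleftrightarrow>
     (\<forall>i \<le> ecc V adj u. \<forall>w\<in>sphere V adj u i. \<forall>w'\<in>sphere V adj u i.
        bnum V adj u w = bnum V adj u w' \<and> cnum V adj u w = cnum V adj u w' \<and>
        anum V adj u w = anum V adj u w')"

definition distance_semiregular ::
  "'v set \<Rightarrow> ('v \<Rightarrow> 'v \<Rightarrow> bool) \<Rightarrow> 'v set \<Rightarrow> (nat \<Rightarrow> nat) \<Rightarrow> (nat \<Rightarrow> nat) \<Rightarrow> bool" where
  "distance_semiregular V adj Y bs cs \<longleftrightarrow>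
     gconnected V adj \<and> Y \<subseteq> V \<and>
     (\<forall>x\<in>Y. distance_regularized V adj x \<and>
        (\<forall>i \<le> ecc V adj x. \<forall>w\<in>sphere V adj x i.
           bnum V adj x w = bs i \<and> cnum V adj x w = cs i))"

end

theory Submission
  imports Defs
begin

(*
  The distance from a point p in the incidence graph can be read off the design: a block is at
  distance 1 or 3 according as it contains p or not, and a point q \<noteq> p is at distance 2 or 4
  according as it shares a block with p or not. Since \<lambda>\<^sub>2 = 0, two points share either
  \<lambda>\<^sub>1 blocks or none, so the points collinear with p are exactly those in the
  \<lambda>\<^sub>1-relation to p. Then t > 0 puts a point collinear with p on every non-flag block
  (distance 3), and t < k together with r < b yields a point at distance 4. Each intersection number
  counts inside one block or among the blocks through one point: a collinear point lies on
  \<lambda>\<^sub>1 blocks through p and r - \<lambda>\<^sub>1 others, and a block missing p has t points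
  collinear with p and k - t others.
*)

lemma walk_snoc: "walk adj n u w \<Longrightarrow> adj w x \<Longrightarrow> walk adj (Suc n) u x"
  by (induction rule: walk.induct) (auto intro: walk.intros)

lemma walk_append: "walk adj n u w \<Longrightarrow> walk adj m w x \<Longrightarrow> walk adj (n + m) u x"
  by (induction rule: walk.induct) (auto intro: walk.intros)

lemma walk_rev:
  assumes "walk adj n u w" and "\<And>x y. adj x y \<Longrightarrow> adj y x"
  shows "walk adj n w u"
  using assms by (induction rule: walk.induct) (auto intro: walk.intros walk_snoc)

lemma walk_length_lower_bound:
  assumes "walk adj n x w" and "\<And>y z. adj y z \<Longrightarrow> f z \<le> f y + 1"
  shows "f w \<le> f x + n"
  using assms by (induction rule: walk.induct) (auto intro: le_trans)

locale distance_labelling =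
  fixes V :: "'v set" and adj :: "'v \<Rightarrow> 'v \<Rightarrow> bool" and u :: 'v and f :: "'v \<Rightarrow> nat"
  assumes label_base: "f u = 0"
    and label_adj_le: "adj x y \<Longrightarrow> f y \<le> f x + 1"
    and walk_label: "w \<in> V \<Longrightarrow> walk adj (f w) u w"
begin

lemma gdist_eq: "w \<in> V \<Longrightarrow> gdist adj u w = f w"
  unfolding gdist_def
proof (rule Least_equality)
  show "walk adj (f w) u w" if "w \<in> V" using walk_label[OF that] .
  show "f w \<le> n" if "walk adj n u w" for n
    using walk_length_lower_bound[of adj n u w f] that label_adj_le label_base by simp
qed

lemma sphere_eq: "sphere V adj u i = {w\<in>V. f w = i}"
  unfolding sphere_def by (auto dest: walk_label gdist_eq)

lemma ecc_eq: "ecc V adj u = Max (f ` V)"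
  unfolding ecc_def by (metis (no_types, lifting) gdist_eq image_cong)

lemma bnum_eq: "w \<in> V \<Longrightarrow> bnum V adj u w = card {x\<in>nbhd V adj w. f x = Suc (f w)}"
  unfolding bnum_def by (auto simp: gdist_eq sphere_eq nbhd_def intro: arg_cong[where f = card])

lemma cnum_eq:
  "w \<in> V \<Longrightarrow> cnum V adj u w = (if f w = 0 then 0 else card {x\<in>nbhd V adj w. f x = f w - 1})"
  unfolding cnum_def by (auto simp: gdist_eq sphere_eq nbhd_def intro: arg_cong[where f = card])

lemma anum_eq: "w \<in> V \<Longrightarrow> anum V adj u w = card {x\<in>nbhd V adj w. f x = f w}"
  unfolding anum_def by (auto simp: gdist_eq sphere_eq nbhd_def intro: arg_cong[where f = card])

lemma gconnected:
  assumes "\<And>x y. adj x y \<Longrightarrow> adj y x"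
  shows "gconnected V adj"
  unfolding gconnected_def
  by (metis walk_append walk_label walk_rev assms)

lemma intersection_numbers_by_label:
  assumes "\<And>w. w \<in> V \<Longrightarrow>
    bnum V adj u w = bs (f w) \<and> cnum V adj u w = cs (f w) \<and> anum V adj u w = as (f w)"
  shows "distance_regularized V adj u"
    and "\<forall>i \<le> ecc V adj u. \<forall>w\<in>sphere V adj u i. bnum V adj u w = bs i \<and> cnum V adj u w = cs i"
  using assms by (auto simp: distance_regularized_def sphere_eq)

end

lemma inc_adj_sym: "inc_adj P Bs I x y \<Longrightarrow> inc_adj P Bs I y x"
  by (cases x; cases y) auto

lemma nbhd_Inl:
  "q \<in> P \<Longrightarrow> nbhd (inc_vertices P Bs) (inc_adj P Bs I) (Inl q) = Inr ` {B\<in>Bs. I q B}"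
  unfolding nbhd_def inc_vertices_def by (auto elim: inc_adj.elims)

lemma nbhd_Inr:
  "B \<in> Bs \<Longrightarrow> nbhd (inc_vertices P Bs) (inc_adj P Bs I) (Inr B) = Inl ` {q\<in>P. I q B}"
  unfolding nbhd_def inc_vertices_def by (auto elim: inc_adj.elims)

lemma card_nbhd_Inl:
  assumes "q \<in> P"
  shows "card {x\<in>nbhd (inc_vertices P Bs) (inc_adj P Bs I) (Inl q). Q x}
       = card {B\<in>Bs. I q B \<and> Q (Inr B)}"
proof -
  have "{x\<in>nbhd (inc_vertices P Bs) (inc_adj P Bs I) (Inl q). Q x}
      = Inr ` {B\<in>Bs. I q B \<and> Q (Inr B)}"
    using assms by (auto simp: nbhd_Inl)
  then show ?thesis by (simp add: card_image)
qed

lemma card_nbhd_Inr: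
  assumes "B \<in> Bs"
  shows "card {x\<in>nbhd (inc_vertices P Bs) (inc_adj P Bs I) (Inr B). Q x}
       = card {q\<in>P. I q B \<and> Q (Inl q)}"
proof -
  have "{x\<in>nbhd (inc_vertices P Bs) (inc_adj P Bs I) (Inr B). Q x}
      = Inl ` {q\<in>P. I q B \<and> Q (Inl q)}"
    using assms by (auto simp: nbhd_Inr)
  then show ?thesis by (simp add: card_image)
qed

definition collinear :: "'b set \<Rightarrow> ('p \<Rightarrow> 'b \<Rightarrow> bool) \<Rightarrow> 'p \<Rightarrow> 'p \<Rightarrow> bool" where
  "collinear Bs I p q \<longleftrightarrow> (\<exists>B\<in>Bs. I p B \<and> I q B)"

definition inc_dist :: "'b set \<Rightarrow> ('p \<Rightarrow> 'b \<Rightarrow> bool) \<Rightarrow> 'p \<Rightarrow> 'p + 'b \<Rightarrow> nat" where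
  "inc_dist Bs I p w =
     (case w of
        Inl q \<Rightarrow> if q = p then 0 else if collinear Bs I p q then 2 else 4
      | Inr B \<Rightarrow> if I p B then 1 else 3)"

lemma inc_dist_le_4: "inc_dist Bs I p w \<le> 4"
  by (auto simp: inc_dist_def split: sum.splits)

lemma inc_dist_adj_le: "inc_adj P Bs I x y \<Longrightarrow> inc_dist Bs I p y \<le> inc_dist Bs I p x + 1"
  by (cases x; cases y) (auto simp: inc_dist_def collinear_def)

lemma conc_pos_iff_collinear: "finite Bs \<Longrightarrow> conc P Bs I p q > 0 \<longleftrightarrow> collinear Bs I p q"
  unfolding conc_def collinear_def by (auto simp: card_gt_0_iff)

(* The type parameter s is left free: with \<lambda>\<^sub>2 = 0 it is necessarily k - 1. *)

locale spbibd_lambda2_zero =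
  fixes P :: "'p set" and Bs :: "'b set" and I :: "'p \<Rightarrow> 'b \<Rightarrow> bool"
    and v b r k l1 s t :: nat
  assumes spbibd: "spbibd P Bs I v b r k l1 0 s t"
    and t_pos: "0 < t" and t_less_k: "t < k"
begin

abbreviation "V \<equiv> inc_vertices P Bs"
abbreviation "A \<equiv> inc_adj P Bs I"

lemma design: "design P Bs I v b r k"
  using spbibd by (simp add: spbibd_def)

lemma finite_P: "finite P" and finite_Bs: "finite Bs" and card_Bs: "card Bs = b"
  and block_size: "B \<in> Bs \<Longrightarrow> card {p\<in>P. I p B} = k"
  and replication: "p \<in> P \<Longrightarrow> card {B\<in>Bs. I p B} = r"
  and r_less_b: "r < b"
  using design by (auto simp: design_def)

lemma conc_cases:
  "p \<in> P \<Longrightarrow> q \<in> P \<Longrightarrow> p \<noteq> q \<Longrightarrow> conc P Bs I p q = l1 \<or> conc P Bs I p q = 0"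
  using spbibd by (simp add: spbibd_def)

lemma card_nonflag_conc_l1:
  "p \<in> P \<Longrightarrow> B \<in> Bs \<Longrightarrow> \<not> I p B \<Longrightarrow> card {q\<in>P. I q B \<and> conc P Bs I p q = l1} = t"
  using spbibd by (simp add: spbibd_def)

lemma l1_pos: "0 < l1"
proof -
  obtain B where B: "B \<in> Bs" using r_less_b card_Bs by fastforce
  have "card {p\<in>P. I p B} \<ge> 2" using block_size[OF B] t_pos t_less_k by simp
  then obtain p q where "p \<in> P" "q \<in> P" "p \<noteq> q" "I p B" "I q B"
    by (auto simp: numeral_2_eq_2 card_le_Suc_iff)
  then show ?thesis
    using B conc_cases[of p q] conc_pos_iff_collinear[OF finite_Bs, of P I p q]
    by (auto simp: collinear_def)
qed

lemma collinear_iff_conc: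
  "p \<in> P \<Longrightarrow> q \<in> P \<Longrightarrow> p \<noteq> q \<Longrightarrow> collinear Bs I p q \<longleftrightarrow> conc P Bs I p q = l1"
  using conc_cases[of p q] conc_pos_iff_collinear[OF finite_Bs, of P I p q] l1_pos by auto

lemma card_nonflag_collinear:
  assumes "p \<in> P" "B \<in> Bs" "\<not> I p B"
  shows "card {q\<in>P. I q B \<and> collinear Bs I p q} = t"
proof -
  have "{q\<in>P. I q B \<and> collinear Bs I p q} = {q\<in>P. I q B \<and> conc P Bs I p q = l1}"
    using assms collinear_iff_conc[OF assms(1)] by blast
  then show ?thesis using card_nonflag_conc_l1[OF assms] by simp
qed

lemma card_nonflag_noncollinear:
  assumes "p \<in> P" "B \<in> Bs" "\<not> I p B"
  shows "card {q\<in>P. I q B \<and> \<not> collinear Bs I p q} = k - t"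
proof -
  have "{q\<in>P. I q B \<and> \<not> collinear Bs I p q} = {q\<in>P. I q B} - {q\<in>P. I q B \<and> collinear Bs I p q}"
    by blast
  then show ?thesis
    using card_nonflag_collinear[OF assms] block_size[OF assms(2)] finite_P
    by (simp add: card_Diff_subset Collect_mono_iff)
qed

lemma card_blocks_not_through:
  assumes "p \<in> P" "q \<in> P" "q \<noteq> p" "collinear Bs I p q"
  shows "card {B\<in>Bs. I q B \<and> \<not> I p B} = r - l1"
proof -
  have "{B\<in>Bs. I q B \<and> \<not> I p B} = {B\<in>Bs. I q B} - {B\<in>Bs. I p B \<and> I q B}"
    by blast
  moreover have "card {B\<in>Bs. I p B \<and> I q B} = l1"
    using assms collinear_iff_conc by (simp add: conc_def)
  ultimately show ?thesis
    using replication[OF assms(2)] finite_Bs by (simp add: card_Diff_subset Collect_mono_iff)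
qed

lemma nonflag_collinear_point:
  assumes "p \<in> P" "B \<in> Bs" "\<not> I p B"
  obtains q where "q \<in> P" "I q B" "collinear Bs I p q"
proof -
  have "card {q\<in>P. I q B \<and> collinear Bs I p q} > 0"
    using card_nonflag_collinear[OF assms] t_pos by simp
  with that show ?thesis by (auto simp: card_gt_0_iff)
qed

lemma point_on_block:
  assumes "p \<in> P"
  obtains B where "B \<in> Bs" "I p B"
proof -
  obtain B where B: "B \<in> Bs" using r_less_b card_Bs by fastforce
  show ?thesis
  proof (cases "I p B")
    case False
    with nonflag_collinear_point[OF assms B] show ?thesis
      by (metis collinear_def that)
  qed (use B that in blast)
qed

lemma noncollinear_point:
  assumes "p \<in> P"
  obtains q where "q \<in> P" "q \<noteq> p" "\<not> collinear Bs I p q"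
proof -
  have "{B\<in>Bs. I p B} \<noteq> Bs" using replication[OF assms] r_less_b card_Bs by auto
  then obtain B where B: "B \<in> Bs" "\<not> I p B" by auto
  then have "card {q\<in>P. I q B \<and> \<not> collinear Bs I p q} > 0"
    using card_nonflag_noncollinear[OF assms] t_less_k by simp
  then obtain q where "q \<in> P" "I q B" "\<not> collinear Bs I p q"
    by (auto simp: card_gt_0_iff)
  with B that show ?thesis by blast
qed

lemma walk_inc_dist:
  assumes p: "p \<in> P" and w: "w \<in> V"
  shows "walk A (inc_dist Bs I p w) (Inl p) w"
proof -
  have walk_flag: "walk A 1 (Inl p) (Inr B)" if "B \<in> Bs" "I p B" for B
    using p that walk_snoc[OF walk0, of A "Inl p" "Inr B"] by simp
  have walk_collinear: "walk A 2 (Inl p) (Inl q)" if q: "q \<in> P" "collinear Bs I p q" for q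
  proof -
    obtain B where "B \<in> Bs" "I p B" "I q B" using q(2) by (auto simp: collinear_def)
    then show ?thesis using walk_flag walk_snoc[of A 1 "Inl p" "Inr B" "Inl q"] q(1)
      by (simp add: numeral_2_eq_2)
  qed
  have walk_nonflag: "walk A 3 (Inl p) (Inr B)" if B: "B \<in> Bs" "\<not> I p B" for B
  proof -
    obtain q where "q \<in> P" "I q B" "collinear Bs I p q"
      using nonflag_collinear_point[OF p B] .
    then show ?thesis using walk_collinear walk_snoc[of A 2 "Inl p" "Inl q" "Inr B"] B(1)
      by (simp add: numeral_3_eq_3 numeral_2_eq_2)
  qed
  have walk_noncollinear: "walk A 4 (Inl p) (Inl q)" if q: "q \<in> P" "\<not> collinear Bs I p q" for q
  proof -
    obtain B where "B \<in> Bs" "I q B" using point_on_block[OF q(1)] .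
    moreover from this have "\<not> I p B" using q(2) by (auto simp: collinear_def)
    ultimately show ?thesis using walk_nonflag walk_snoc[of A 3 "Inl p" "Inr B" "Inl q"] q(1)
      by (simp add: eval_nat_numeral)
  qed
  from w walk_flag walk_collinear walk_nonflag walk_noncollinear show ?thesis
    by (auto simp: inc_vertices_def inc_dist_def intro: walk0)
qed

lemma distance_labelling_inc_dist:
  "p \<in> P \<Longrightarrow> distance_labelling V A (Inl p) (inc_dist Bs I p)"
  by unfold_locales
    (use inc_dist_adj_le walk_inc_dist in \<open>auto simp: inc_dist_def[of _ _ _ "Inl p"]\<close>)

lemma ecc_eq_4:
  assumes p: "p \<in> P"
  shows "ecc V A (Inl p) = 4"
proof -
  interpret distance_labelling V A "Inl p" "inc_dist Bs I p"
    using distance_labelling_inc_dist[OF p] .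
  obtain q where q: "q \<in> P" "q \<noteq> p" "\<not> collinear Bs I p q" using noncollinear_point[OF p] .
  have "Max (inc_dist Bs I p ` V) = 4"
  proof (rule Max_eqI)
    show "finite (inc_dist Bs I p ` V)" using finite_P finite_Bs by (simp add: inc_vertices_def)
    show "y \<le> 4" if "y \<in> inc_dist Bs I p ` V" for y using that inc_dist_le_4 by auto
    show "4 \<in> inc_dist Bs I p ` V"
      using q by (force simp: inc_dist_def inc_vertices_def)
  qed
  then show ?thesis by (simp add: ecc_eq)
qed

lemma intersection_numbers_at_point:
  assumes p: "p \<in> P" and q: "q \<in> P"
  shows "bnum V A (Inl p) (Inl q) = [r, k - 1, r - l1, k - t, 0] ! inc_dist Bs I p (Inl q)
       \<and> cnum V A (Inl p) (Inl q) = [0, 1, l1, t, r] ! inc_dist Bs I p (Inl q)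
       \<and> anum V A (Inl p) (Inl q) = 0"
proof -
  interpret distance_labelling V A "Inl p" "inc_dist Bs I p"
    using distance_labelling_inc_dist[OF p] .
  let ?d = "inc_dist Bs I p"
  have qV: "Inl q \<in> V" using q by (simp add: inc_vertices_def)
  have b: "bnum V A (Inl p) (Inl q) = card {B\<in>Bs. I q B \<and> ?d (Inr B) = Suc (?d (Inl q))}"
    and c: "cnum V A (Inl p) (Inl q) =
      (if ?d (Inl q) = 0 then 0 else card {B\<in>Bs. I q B \<and> ?d (Inr B) = ?d (Inl q) - 1})"
    and a: "anum V A (Inl p) (Inl q) = 0"
    by (simp_all add: bnum_eq[OF qV] cnum_eq[OF qV] anum_eq[OF qV] card_nbhd_Inl[OF q])
      (simp add: inc_dist_def)
  consider "q = p" | "q \<noteq> p" "collinear Bs I p q" | "q \<noteq> p" "\<not> collinear Bs I p q" by blast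
  then show ?thesis
  proof cases
    case 1
    then have "{B\<in>Bs. I q B \<and> ?d (Inr B) = Suc (?d (Inl q))} = {B\<in>Bs. I p B}"
      by (auto simp: inc_dist_def)
    with 1 show ?thesis using replication[OF p] a b c by (simp add: inc_dist_def)
  next
    case 2
    then have "{B\<in>Bs. I q B \<and> ?d (Inr B) = Suc (?d (Inl q))} = {B\<in>Bs. I q B \<and> \<not> I p B}"
      and "{B\<in>Bs. I q B \<and> ?d (Inr B) = ?d (Inl q) - 1} = {B\<in>Bs. I p B \<and> I q B}"
      by (auto simp: inc_dist_def)
    then show ?thesis
      using 2 card_blocks_not_through[OF p q 2] collinear_iff_conc[OF p q] a b c
      by (simp add: inc_dist_def[of _ _ _ "Inl q"] conc_def)
  next
    case 3
    then have "{B\<in>Bs. I q B \<and> ?d (Inr B) = ?d (Inl q) - 1} = {B\<in>Bs. I q B}"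
      by (auto simp: inc_dist_def collinear_def)
    then show ?thesis using 3 replication[OF q] a b c by (simp add: inc_dist_def)
  qed
qed

lemma intersection_numbers_at_block:
  assumes p: "p \<in> P" and B: "B \<in> Bs"
  shows "bnum V A (Inl p) (Inr B) = [r, k - 1, r - l1, k - t, 0] ! inc_dist Bs I p (Inr B)
       \<and> cnum V A (Inl p) (Inr B) = [0, 1, l1, t, r] ! inc_dist Bs I p (Inr B)
       \<and> anum V A (Inl p) (Inr B) = 0"
proof -
  interpret distance_labelling V A "Inl p" "inc_dist Bs I p"
    using distance_labelling_inc_dist[OF p] .
  let ?d = "inc_dist Bs I p"
  have BV: "Inr B \<in> V" using B by (simp add: inc_vertices_def)
  have b: "bnum V A (Inl p) (Inr B) = card {q\<in>P. I q B \<and> ?d (Inl q) = Suc (?d (Inr B))}"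
    and c: "cnum V A (Inl p) (Inr B) = card {q\<in>P. I q B \<and> ?d (Inl q) = ?d (Inr B) - 1}"
    and a: "anum V A (Inl p) (Inr B) = 0"
    by (simp_all add: bnum_eq[OF BV] cnum_eq[OF BV] anum_eq[OF BV] card_nbhd_Inr[OF B])
      (auto simp: inc_dist_def)
  show ?thesis
  proof (cases "I p B")
    case True
    then have "collinear Bs I p q" if "I q B" for q using that B by (auto simp: collinear_def)
    then have "{q\<in>P. I q B \<and> ?d (Inl q) = Suc (?d (Inr B))} = {q\<in>P. I q B} - {p}"
      and "{q\<in>P. I q B \<and> ?d (Inl q) = ?d (Inr B) - 1} = {p}"
      using p True by (auto simp: inc_dist_def)
    then show ?thesis using True block_size[OF B] finite_P p a b c
      by (simp add: inc_dist_def[of _ _ _ "Inr B"])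
  next
    case False
    then have "{q\<in>P. I q B \<and> ?d (Inl q) = Suc (?d (Inr B))} = {q\<in>P. I q B \<and> \<not> collinear Bs I p q}"
      and "{q\<in>P. I q B \<and> ?d (Inl q) = ?d (Inr B) - 1} = {q\<in>P. I q B \<and> collinear Bs I p q}"
      by (auto simp: inc_dist_def)
    then show ?thesis
      using False card_nonflag_collinear[OF p B False] card_nonflag_noncollinear[OF p B False] a b c
      by (simp add: inc_dist_def[of _ _ _ "Inr B"])
  qed
qed

lemma intersection_numbers:
  assumes "p \<in> P" and "w \<in> V"
  shows "bnum V A (Inl p) w = [r, k - 1, r - l1, k - t, 0] ! inc_dist Bs I p w
       \<and> cnum V A (Inl p) w = [0, 1, l1, t, r] ! inc_dist Bs I p w
       \<and> anum V A (Inl p) w = 0"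
  using assms intersection_numbers_at_point intersection_numbers_at_block
  by (auto simp: inc_vertices_def)

lemma gconnected_incidence_graph: "gconnected V A"
proof -
  obtain p where "p \<in> P" using design by (force simp: design_def)
  then show ?thesis
    using distance_labelling.gconnected[OF distance_labelling_inc_dist] inc_adj_sym by blast
qed

end

theorem lemma4p2:
  fixes P :: "'p set" and Bs :: "'b set" and I :: "'p \<Rightarrow> 'b \<Rightarrow> bool"
    and v b r k l1 t :: nat
  assumes "spbibd P Bs I v b r k l1 0 (k - 1) t"
    and "0 < t" and "t < k"
  shows "(\<forall>p\<in>P. distance_regularized (inc_vertices P Bs) (inc_adj P Bs I) (Inl p))
       \<and> distance_semiregular (inc_vertices P Bs) (inc_adj P Bs I) (Inl ` P)
           (\<lambda>i. [r, k - 1, r - l1, k - t, 0] ! i) (\<lambda>i. [0, 1, l1, t, r] ! i)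
       \<and> (\<forall>p\<in>P. ecc (inc_vertices P Bs) (inc_adj P Bs I) (Inl p) = 4)"
proof -
  interpret spbibd_lambda2_zero P Bs I v b r k l1 "k - 1" t
    using assms by unfold_locales
  let ?bs = "\<lambda>i. [r, k - 1, r - l1, k - t, 0] ! i" and ?cs = "\<lambda>i. [0, 1, l1, t, r] ! i"
  have "distance_regularized V A (Inl p)"
    and "\<forall>i \<le> ecc V A (Inl p). \<forall>w\<in>sphere V A (Inl p) i.
           bnum V A (Inl p) w = ?bs i \<and> cnum V A (Inl p) w = ?cs i"
    if p: "p \<in> P" for p
    using distance_labelling.intersection_numbers_by_label[OF distance_labelling_inc_dist[OF p]
        intersection_numbers[OF p]] by blast+
  moreover have "Inl ` P \<subseteq> V" by (auto simp: inc_vertices_def)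
  ultimately show ?thesis
    using gconnected_incidence_graph ecc_eq_4 by (auto simp: distance_semiregular_def)
qed

end
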